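(* Let $G$ and $G'$ be temporal networks (with distinct event times) whose edge-labelled TEGs are isomorphic, and suppose the TEG may have several weakly connected components. Then $G'$ is obtained from $G$ by a relabelling of nodes together with a time translation applied independently to the events of each weakly connected component of the TEG. If moreover the vertices of the TEG are additionally labelled by their event times (and the isomorphism preserves these), then $G$ and $G'$ coincide up to relabelling of nodes, i.e. the time-stamped edge-labelled TEG uniquely defines the temporal network.
   Context: A temporal network consists of finitely many events $e_i=(u_i,v_i,t_i)$ with nodes $u_i\neq v_i$ and distinct times, indexed in increasing time order. The TEG is the directed graph with vertex set the events and an edge $(e_i,e_j)$ whenever $e_j$ is the first event after $e_i$ containing $u_i$, or the first event after $e_i$ containing $v_i$. Each edge is labelled by $\tau=t_j-t_i$ and by the motif $\mu\in\{\mathrm{ABAB},\mathrm{ABBA},\mathrm{ABAC},\mathrm{ABCA},\mathrm{ABBC},\mathrm{ABCB}\}$, the word obtained from $(u_i,v_i,u_j,v_j)$ by writing A for $u_i$, B for $v_i$ and C for any other node. The edge-labelled TEG is this directed graph with edge labels $(\tau,\mu)$ and the event data forgotten; isomorphism means a vertex bijection preserving edges and labels. *)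

theory Defs
  imports Complex_Main
begin

type_synonym 'v event = "'v \<times> 'v \<times> real"

definition src :: "'v event \<Rightarrow> 'v" where "src e = fst e"
definition dst :: "'v event \<Rightarrow> 'v" where "dst e = fst (snd e)"
definition tm :: "'v event \<Rightarrow> real" where "tm e = snd (snd e)"

definition temporal_network :: "'v event set \<Rightarrow> bool" where
  "temporal_network E \<longleftrightarrow> finite E \<and> (\<forall>e\<in>E. src e \<noteq> dst e) \<and> inj_on tm E"

definition nodes :: "'v event set \<Rightarrow> 'v set" where
  "nodes E = src ` E \<union> dst ` E"

definition contains :: "'v \<Rightarrow> 'v event \<Rightarrow> bool" where
  "contains x e \<longleftrightarrow> x = src e \<or> x = dst e"

definition first_after :: "'v event set \<Rightarrow> 'v \<Rightarrow> 'v event \<Rightarrow> 'v event \<Rightarrow> bool" where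
  "first_after E x e f \<longleftrightarrow> f \<in> E \<and> tm e < tm f \<and> contains x f \<and>
     (\<forall>g\<in>E. tm e < tm g \<and> tm g < tm f \<longrightarrow> \<not> contains x g)"

definition teg_edge :: "'v event set \<Rightarrow> 'v event \<Rightarrow> 'v event \<Rightarrow> bool" where
  "teg_edge E e f \<longleftrightarrow> e \<in> E \<and> (first_after E (src e) e f \<or> first_after E (dst e) e f)"

definition teg_rel :: "'v event set \<Rightarrow> ('v event \<times> 'v event) set" where
  "teg_rel E = {(e, f). teg_edge E e f}"

definition weakly_connected :: "'v event set \<Rightarrow> 'v event \<Rightarrow> 'v event \<Rightarrow> bool" where
  "weakly_connected E e f \<longleftrightarrow> (e, f) \<in> (teg_rel E \<union> (teg_rel E)\<inverse>)\<^sup>*"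

definition tau :: "'v event \<Rightarrow> 'v event \<Rightarrow> real" where
  "tau e f = tm f - tm e"

datatype mletter = A | B | C

definition mcode :: "'v event \<Rightarrow> 'v \<Rightarrow> mletter" where
  "mcode e x = (if x = src e then A else if x = dst e then B else C)"

definition motif :: "'v event \<Rightarrow> 'v event \<Rightarrow> mletter list" where
  "motif e f = [mcode e (src e), mcode e (dst e), mcode e (src f), mcode e (dst f)]"

definition teg_iso :: "'v event set \<Rightarrow> 'w event set \<Rightarrow> ('v event \<Rightarrow> 'w event) \<Rightarrow> bool" where
  "teg_iso E E' \<phi> \<longleftrightarrow> bij_betw \<phi> E E' \<and>
     (\<forall>e\<in>E. \<forall>f\<in>E. teg_edge E' (\<phi> e) (\<phi> f) \<longleftrightarrow> teg_edge E e f) \<and>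
     (\<forall>e\<in>E. \<forall>f\<in>E. teg_edge E e f \<longrightarrow>
        tau (\<phi> e) (\<phi> f) = tau e f \<and> motif (\<phi> e) (\<phi> f) = motif e f)"

end

theory Submission
  imports Defs
begin

text \<open>
  Write \<open>\<sigma>\<close> for the node map that sends the node playing role A (resp. B) in an event \<open>e\<close> to
  the node playing the same role in \<open>\<phi> e\<close>. Along a TEG edge from \<open>e\<close> to \<open>g\<close> the motif records
  which roles in \<open>e\<close> the nodes of \<open>g\<close> play, so the two events induce the same correspondence
  on their common nodes. The successive events of one node are joined by TEG edges, hence the
  correspondence does not depend on the event, \<open>\<sigma>\<close> is well defined, and the same construction
  for \<open>\<phi>\<inverse>\<close> inverts it. The label \<open>\<tau>\<close> makes \<open>tm (\<phi> e) - tm e\<close> constant along edges, hence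
  on weakly connected components; it vanishes if \<open>\<phi>\<close> preserves times.
\<close>

fun letter_node :: "'v event \<Rightarrow> mletter \<Rightarrow> 'v" where
  "letter_node e A = src e"
| "letter_node e B = dst e"
| "letter_node e C = undefined"

lemma mcode_neq_C_iff: "mcode e x \<noteq> C \<longleftrightarrow> contains x e"
  by (simp add: mcode_def contains_def)

lemma letter_node_mcode: "contains x e \<Longrightarrow> letter_node e (mcode e x) = x"
  by (auto simp: mcode_def contains_def)

lemma letter_node_eq_if_motif_eq:
  assumes "motif a' b' = motif a b" and "contains x a" and "contains x b"
  shows "letter_node a' (mcode a x) = letter_node b' (mcode b x)"
proof -
  have "mcode a x \<noteq> C"
    using assms(2) by (simp add: mcode_neq_C_iff)
  show ?thesis
  proof (cases "x = src b")
    case True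
    then have code: "mcode a' (src b') = mcode a x"
      using assms(1) by (simp add: motif_def)
    then have "contains (src b') a'"
      using \<open>mcode a x \<noteq> C\<close> mcode_neq_C_iff by metis
    then have "letter_node a' (mcode a x) = src b'"
      using code letter_node_mcode by metis
    also have "\<dots> = letter_node b' (mcode b x)"
      using True by (simp add: mcode_def)
    finally show ?thesis .
  next
    case False
    then have "x = dst b"
      using assms(3) by (simp add: contains_def)
    then have code: "mcode a' (dst b') = mcode a x"
      using assms(1) by (simp add: motif_def)
    then have "contains (dst b') a'"
      using \<open>mcode a x \<noteq> C\<close> mcode_neq_C_iff by metis
    then have "letter_node a' (mcode a x) = dst b'"
      using code letter_node_mcode by metis
    also have "\<dots> = letter_node b' (mcode b x)"
      using False \<open>x = dst b\<close> by (simp add: mcode_def)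
    finally show ?thesis .
  qed
qed

lemma teg_edge_in: "teg_edge E e g \<Longrightarrow> e \<in> E \<and> g \<in> E"
  by (simp add: teg_edge_def first_after_def) blast

lemma teg_edge_if_first_after:
  "e \<in> E \<Longrightarrow> contains x e \<Longrightarrow> first_after E x e g \<Longrightarrow> teg_edge E e g"
  by (auto simp: teg_edge_def contains_def)

lemma latest_before_first_after:
  assumes "finite E" and "e \<in> E" "contains x e" and "f \<in> E" "contains x f" "tm e < tm f"
  obtains g where "g \<in> E" "contains x g" "tm e \<le> tm g" "first_after E x g f"
proof -
  define S where "S = {g \<in> E. contains x g \<and> tm e \<le> tm g \<and> tm g < tm f}"
  have fin: "finite (tm ` S)" and "e \<in> S"
    using assms unfolding S_def by auto
  then have "Max (tm ` S) \<in> tm ` S"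
    by (intro Max_in) auto
  then obtain g where g: "g \<in> S" "tm g = Max (tm ` S)"
    by auto
  have latest: "tm h \<le> tm g" if "h \<in> S" for h
    using g(2) fin that by simp
  have "first_after E x g f"
    unfolding first_after_def
  proof (intro conjI ballI impI)
    show "f \<in> E" "tm g < tm f" "contains x f"
      using assms(4,5) g(1) unfolding S_def by auto
  next
    fix h assume h: "h \<in> E" "tm g < tm h \<and> tm h < tm f"
    show "\<not> contains x h"
    proof
      assume "contains x h"
      with h g(1) have "h \<in> S"
        unfolding S_def by auto
      then have "tm h \<le> tm g"
        by (rule latest)
      with h show False
        by simp
    qed
  qed
  with g(1) show thesis
    using that unfolding S_def by blast
qed

text \<open>The events of a node, in temporal order, are joined by TEG edges.\<close>

lemma eq_along_node_events:
  fixes P :: "'v event \<Rightarrow> 'a"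
  assumes fin: "finite E" and inj: "inj_on tm E"
    and step: "\<And>e g. teg_edge E e g \<Longrightarrow> contains x e \<Longrightarrow> contains x g \<Longrightarrow> P e = P g"
    and e: "e \<in> E" "contains x e" and f: "f \<in> E" "contains x f"
  shows "P e = P f"
proof -
  have earlier: "P e = P f"
    if "e \<in> E" "contains x e" "f \<in> E" "contains x f" "tm e < tm f" for e f
    using that
  proof (induction "card {h \<in> E. tm h < tm f}" arbitrary: f rule: less_induct)
    case less
    obtain g where g: "g \<in> E" "contains x g" "tm e \<le> tm g" "first_after E x g f"
      using latest_before_first_after[OF fin less.prems] .
    have "P g = P f"
      using step[OF teg_edge_if_first_after[OF g(1,2,4)] g(2) less.prems(4)] .
    moreover have "P e = P g"
    proof (cases "e = g")
      case False
      then have "tm e \<noteq> tm g"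
        using inj_onD[OF inj _ less.prems(1) g(1)] by blast
      with g(3) have "tm e < tm g"
        by simp
      have "tm g < tm f"
        using g(4) unfolding first_after_def by blast
      then have "{h \<in> E. tm h < tm g} \<subset> {h \<in> E. tm h < tm f}"
        using g(1) by auto
      then have "card {h \<in> E. tm h < tm g} < card {h \<in> E. tm h < tm f}"
        using fin by (simp add: psubset_card_mono)
      then show ?thesis
        using less.hyps less.prems(1,2) g(1,2) \<open>tm e < tm g\<close> by blast
    qed simp
    ultimately show ?case by simp
  qed
  consider "e = f" | "tm e < tm f" | "tm f < tm e"
    using inj_onD[OF inj _ e(1) f(1)] by fastforce
  then show ?thesis
  proof cases
    case 2
    then show ?thesis using earlier e f by blast
  next
    case 3
    then show ?thesis using earlier[OF f e] by simp
  qed simp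
qed

lemma teg_iso_bij_betw: "teg_iso E E' \<phi> \<Longrightarrow> bij_betw \<phi> E E'"
  by (simp add: teg_iso_def)

lemma teg_iso_teg_edge_iff:
  "teg_iso E E' \<phi> \<Longrightarrow> e \<in> E \<Longrightarrow> f \<in> E \<Longrightarrow> teg_edge E' (\<phi> e) (\<phi> f) \<longleftrightarrow> teg_edge E e f"
  by (simp add: teg_iso_def)

lemma teg_iso_labels:
  assumes "teg_iso E E' \<phi>" and "teg_edge E e f"
  shows "tau (\<phi> e) (\<phi> f) = tau e f" and "motif (\<phi> e) (\<phi> f) = motif e f"
  using assms teg_edge_in[OF assms(2)] by (simp_all add: teg_iso_def)

lemma teg_iso_inv_into:
  assumes iso: "teg_iso E E' \<phi>"
  shows "teg_iso E' E (inv_into E \<phi>)"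
proof -
  let ?\<psi> = "inv_into E \<phi>"
  have bij: "bij_betw \<phi> E E'"
    using iso by (rule teg_iso_bij_betw)
  have inv: "?\<psi> y \<in> E" "\<phi> (?\<psi> y) = y" if "y \<in> E'" for y
    using bij that by (auto intro: bij_betw_apply bij_betw_inv_into bij_betw_inv_into_right)
  have edge: "teg_edge E (?\<psi> a) (?\<psi> b) \<longleftrightarrow> teg_edge E' a b" if "a \<in> E'" "b \<in> E'" for a b
    using teg_iso_teg_edge_iff[OF iso inv(1)[OF that(1)] inv(1)[OF that(2)]] inv(2) that by simp
  have "tau (?\<psi> a) (?\<psi> b) = tau a b \<and> motif (?\<psi> a) (?\<psi> b) = motif a b"
    if "teg_edge E' a b" for a b
  proof -
    have "a \<in> E'" "b \<in> E'"
      using teg_edge_in[OF that] by auto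
    then show ?thesis
      using teg_iso_labels[OF iso] edge that inv(2) by metis
  qed
  then show ?thesis
    using bij_betw_inv_into[OF bij] edge unfolding teg_iso_def by blast
qed

definition node_map :: "'v event set \<Rightarrow> ('v event \<Rightarrow> 'w event) \<Rightarrow> 'v \<Rightarrow> 'w" where
  "node_map E \<phi> x = (let e = SOME e. e \<in> E \<and> contains x e in letter_node (\<phi> e) (mcode e x))"

lemma node_map_eq:
  assumes "temporal_network E" "teg_iso E E' \<phi>" and "e \<in> E" "contains x e"
  shows "node_map E \<phi> x = letter_node (\<phi> e) (mcode e x)"
proof -
  have fin: "finite E" and inj: "inj_on tm E"
    using assms(1) unfolding temporal_network_def by auto
  have step: "letter_node (\<phi> a) (mcode a x) = letter_node (\<phi> b) (mcode b x)"
    if "teg_edge E a b" "contains x a" "contains x b" for a b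
    using letter_node_eq_if_motif_eq[OF teg_iso_labels(2)[OF assms(2) that(1)] that(2,3)] .
  let ?e = "SOME e. e \<in> E \<and> contains x e"
  have "?e \<in> E \<and> contains x ?e"
    by (rule someI[of "\<lambda>e. e \<in> E \<and> contains x e" e]) (use assms(3,4) in simp)
  then show ?thesis
    unfolding node_map_def Let_def
    using eq_along_node_events[where P = "\<lambda>e. letter_node (\<phi> e) (mcode e x)", OF fin inj step]
      assms(3,4) by blast
qed

lemma
  assumes "temporal_network E" "teg_iso E E' \<phi>" and "e \<in> E"
  shows node_map_src: "node_map E \<phi> (src e) = src (\<phi> e)"
    and node_map_dst: "node_map E \<phi> (dst e) = dst (\<phi> e)"
proof -
  have "src e \<noteq> dst e"
    using assms(1,3) unfolding temporal_network_def by blast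
  then show "node_map E \<phi> (src e) = src (\<phi> e)" "node_map E \<phi> (dst e) = dst (\<phi> e)"
    using node_map_eq[OF assms, of "src e"] node_map_eq[OF assms, of "dst e"]
    by (simp_all add: contains_def mcode_def)
qed

lemma inj_on_node_map:
  assumes "temporal_network E" "temporal_network E'" "teg_iso E E' \<phi>"
  shows "inj_on (node_map E \<phi>) (nodes E)"
proof (rule inj_on_inverseI)
  let ?\<psi> = "inv_into E \<phi>"
  have bij: "bij_betw \<phi> E E'"
    using assms(3) by (rule teg_iso_bij_betw)
  fix x assume "x \<in> nodes E"
  then obtain e where e: "e \<in> E" and x: "x = src e \<or> x = dst e"
    unfolding nodes_def by blast
  have phi_e: "\<phi> e \<in> E'" and psi_phi_e: "?\<psi> (\<phi> e) = e"
    using bij e by (auto simp: bij_betw_apply bij_betw_inv_into_left)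
  have iso': "teg_iso E' E ?\<psi>"
    using teg_iso_inv_into[OF assms(3)] .
  show "node_map E' ?\<psi> (node_map E \<phi> x) = x"
    using x node_map_src[OF assms(2) iso' phi_e] node_map_dst[OF assms(2) iso' phi_e]
      node_map_src[OF assms(1,3) e] node_map_dst[OF assms(1,3) e] psi_phi_e
    by auto
qed

lemma time_shift_const_on_weak_components:
  assumes "teg_iso E E' \<phi>" and "weakly_connected E e f"
  shows "tm (\<phi> e) - tm e = tm (\<phi> f) - tm f"
proof -
  have edge: "tm (\<phi> a) - tm a = tm (\<phi> b) - tm b" if "teg_edge E a b" for a b
    using teg_iso_labels(1)[OF assms(1) that] by (simp add: tau_def)
  have "(e, f) \<in> (teg_rel E \<union> (teg_rel E)\<inverse>)\<^sup>*"
    using assms(2) unfolding weakly_connected_def .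
  then show ?thesis
  proof (induction rule: rtrancl_induct)
    case (step g h)
    then have "teg_edge E g h \<or> teg_edge E h g"
      by (auto simp: teg_rel_def)
    with step.IH show ?case
      using edge[of g h] edge[of h g] by auto
  qed simp
qed

theorem mainTheorem3:
  fixes E :: "'v event set" and E' :: "'w event set" and \<phi> :: "'v event \<Rightarrow> 'w event"
  assumes "temporal_network E" and "temporal_network E'"
    and "teg_iso E E' \<phi>"
  shows "(\<exists>(\<sigma> :: 'v \<Rightarrow> 'w) (\<delta> :: 'v event \<Rightarrow> real).
            inj_on \<sigma> (nodes E) \<and>
            (\<forall>e\<in>E. \<forall>f\<in>E. weakly_connected E e f \<longrightarrow> \<delta> e = \<delta> f) \<and>
            bij_betw (\<lambda>e. (\<sigma> (src e), \<sigma> (dst e), tm e + \<delta> e)) E E')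
       \<and> ((\<forall>e\<in>E. tm (\<phi> e) = tm e) \<longrightarrow>
            (\<exists>\<sigma> :: 'v \<Rightarrow> 'w. inj_on \<sigma> (nodes E) \<and>
               bij_betw (\<lambda>e. (\<sigma> (src e), \<sigma> (dst e), tm e)) E E'))"
proof -
  let ?\<sigma> = "node_map E \<phi>" and ?\<delta> = "\<lambda>e. tm (\<phi> e) - tm e"
  have bij: "bij_betw \<phi> E E'"
    using assms(3) by (rule teg_iso_bij_betw)
  have inj: "inj_on ?\<sigma> (nodes E)"
    using inj_on_node_map[OF assms] .
  have "(?\<sigma> (src e), ?\<sigma> (dst e), tm (\<phi> e)) = \<phi> e" if "e \<in> E" for e
    using node_map_src[OF assms(1,3) that] node_map_dst[OF assms(1,3) that]
    by (simp add: src_def dst_def tm_def)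
  then have shifted: "bij_betw (\<lambda>e. (?\<sigma> (src e), ?\<sigma> (dst e), tm e + ?\<delta> e)) E E'"
    using bij by (simp cong: bij_betw_cong)
  have const: "\<forall>e\<in>E. \<forall>f\<in>E. weakly_connected E e f \<longrightarrow> ?\<delta> e = ?\<delta> f"
    using time_shift_const_on_weak_components[OF assms(3)] by blast
  have "bij_betw (\<lambda>e. (?\<sigma> (src e), ?\<sigma> (dst e), tm e)) E E'" if "\<forall>e\<in>E. tm (\<phi> e) = tm e"
    using shifted that by (simp cong: bij_betw_cong)
  with inj shifted const show ?thesis
    by (intro conjI impI exI[of _ ?\<sigma>] exI[of _ ?\<delta>]) auto
qed

end
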